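(* If $\Gamma\vdash^{n_1} t(u,x.r)(u',y.r'):\sigma$ is derivable in $\cap J$ (with $x\notin\mathrm{fv}(u')\cup\mathrm{fv}(r')$), then there exist an environment $\Sigma\sqsubseteq\Gamma$ and $n_2\le n_1$ such that $\Sigma\vdash^{n_2} t(u,x.r(u',y.r')):\sigma$ is derivable in $\cap J$.
   Context: Terms $\mathtt T_J$: $t,u,r ::= x \mid \lambda x.t \mid t(u,y.r)$ ($y$ bound in $r$), up to $\alpha$-equivalence. System $\cap J$: types $\sigma,\tau ::= \alpha \mid \mathcal M\to\sigma$, $\mathcal M=[\sigma_i]_{i\in I}$ a finite possibly empty multiset; $\sqcup$ multiset union; environments map variables to multisets, $\wedge$ pointwise union, $\Gamma;x:\mathcal M$ extension with $x\notin\mathrm{dom}\,\Gamma$; $\Sigma\sqsubseteq\Gamma$ means $\Sigma(z)\subseteq\Gamma(z)$ (multiset inclusion) for every variable $z$. $\mathrm{ch}(\mathcal M)=\mathcal M$ if $\mathcal M\ne[\,]$, $\mathrm{ch}([\,])=[\tau]$ for an arbitrary $\tau$. Rules: (var) $x:[\sigma]\vdash x:\sigma$; (abs) from $\Gamma;x:\mathcal M\vdash t:\sigma$ infer $\Gamma\vdash\lambda x.t:\mathcal M\to\sigma$; (many) from $(\Gamma_i\vdash t:\sigma_i)_{i\in I}$, $I\ne\emptyset$, infer $\wedge_i\Gamma_i\vdash t:[\sigma_i]_{i\in I}$; (app) from $\Gamma\vdash t:\mathrm{ch}([\mathcal M_i\to\tau_i]_{i\in I})$, $\Delta\vdash u:\mathrm{ch}(\sqcup_i\mathcal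 M_i)$, $\Lambda;y:[\tau_i]_{i\in I}\vdash r:\sigma$ infer $\Gamma\wedge\Delta\wedge\Lambda\vdash t(u,y.r):\sigma$. $\vdash^n$ indicates a derivation of size $n$ = number of rule instances other than (many). *)

theory Defs
  imports Main "HOL-Library.Multiset"
begin

type_synonym var = nat

(* Terms T_J (raw named terms; App t u y r is t(u,y.r), y bound in r) *)
datatype trm = Var var | Lam var trm | App trm trm var trm

fun fv :: "trm \<Rightarrow> var set" where
  "fv (Var x) = {x}"
| "fv (Lam x t) = fv t - {x}"
| "fv (App t u y r) = fv t \<union> fv u \<union> (fv r - {y})"

datatype ty = TAtom nat | Arr "ty multiset" ty

type_synonym env = "var \<Rightarrow> ty multiset"

definition env_empty :: env where "env_empty = (\<lambda>_. {#})"

definition env_union :: "env \<Rightarrow> env \<Rightarrow> env" where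
  "env_union \<Gamma> \<Delta> = (\<lambda>z. \<Gamma> z + \<Delta> z)"

definition env_sub :: "env \<Rightarrow> env \<Rightarrow> bool" where
  "env_sub \<Sigma> \<Gamma> \<longleftrightarrow> (\<forall>z. \<Sigma> z \<subseteq># \<Gamma> z)"

(* ch_rel M N : N is a possible value of ch(M) *)
definition ch_rel :: "ty multiset \<Rightarrow> ty multiset \<Rightarrow> bool" where
  "ch_rel M N \<longleftrightarrow> (M \<noteq> {#} \<and> N = M) \<or> (M = {#} \<and> (\<exists>\<tau>. N = {#\<tau>#}))"

(* has_type \<Gamma> t \<sigma> n  :  \<Gamma> \<turnstile>^n t : \<sigma>
   has_mtype \<Gamma> t M n :  \<Gamma> \<turnstile>^n t : M  (obtained by rule many)
   The size n counts all rule instances except (many). *)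
inductive has_type :: "env \<Rightarrow> trm \<Rightarrow> ty \<Rightarrow> nat \<Rightarrow> bool"
  and has_mtype :: "env \<Rightarrow> trm \<Rightarrow> ty multiset \<Rightarrow> nat \<Rightarrow> bool" where
  t_var: "has_type (env_empty(x := {#\<sigma>#})) (Var x) \<sigma> 1"
| t_abs: "has_type \<Gamma> t \<sigma> n \<Longrightarrow> has_type (\<Gamma>(x := {#})) (Lam x t) (Arr (\<Gamma> x) \<sigma>) (Suc n)"
| t_many: "xs \<noteq> [] \<Longrightarrow> \<forall>p\<in>set xs. has_type (fst p) t (fst (snd p)) (snd (snd p)) \<Longrightarrow>
     has_mtype (foldr env_union (map fst xs) env_empty) t (mset (map (fst \<circ> snd) xs))
          (sum_list (map (snd \<circ> snd) xs))"
| t_app: "has_mtype \<Gamma> t N1 n1 \<Longrightarrow> ch_rel (mset (map (\<lambda>(M, \<tau>). Arr M \<tau>) ps)) N1 \<Longrightarrow>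
     has_mtype \<Delta> u N2 n2 \<Longrightarrow> ch_rel (sum_list (map fst ps)) N2 \<Longrightarrow>
     has_type \<Lambda> r \<sigma> n3 \<Longrightarrow> \<Lambda> y = mset (map snd ps) \<Longrightarrow>
     has_type (env_union (env_union \<Gamma> \<Delta>) (\<Lambda>(y := {#}))) (App t u y r) \<sigma> (Suc (n1 + n2 + n3))"

end

theory Submission
  imports Defs
begin

(* The left part t(u,x.r) of the outer application is typed by ch([M_i \<rightarrow> \<tau>_i]_i), i.e. by a
   family of derivations of t(u,x.r), each splitting into derivations for t, u and r.  Gathering
   the family gives one typing of t, one of u, and a typing of r by the same ch([M_i \<rightarrow> \<tau>_i]_i),
   so r can replace t(u,x.r) in the outer application while t and u are put back around it.
   Since x is not free in u' and r', their environments assign nothing to x, so the binder x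
   receives exactly the types r needs.  While gathering, typings of ch([]) are arbitrary
   witnesses that may be dropped, and the several application rules for t(u,x.r) collapse into
   one: hence only \<Sigma> \<sqsubseteq> \<Gamma> and n2 \<le> n1. *)

abbreviation arrows :: "(ty multiset \<times> ty) list \<Rightarrow> ty multiset" where
  "arrows ps \<equiv> mset (map (\<lambda>(M, \<tau>). Arr M \<tau>) ps)"

abbreviation arrow_domains :: "(ty multiset \<times> ty) list \<Rightarrow> ty multiset" where
  "arrow_domains ps \<equiv> sum_list (map fst ps)"

abbreviation arrow_codomains :: "(ty multiset \<times> ty) list \<Rightarrow> ty multiset" where
  "arrow_codomains ps \<equiv> mset (map snd ps)"

definition has_ch_type :: "env \<Rightarrow> trm \<Rightarrow> ty multiset \<Rightarrow> nat \<Rightarrow> bool" where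
  "has_ch_type \<Gamma> t M n \<longleftrightarrow> (\<exists>N. has_mtype \<Gamma> t N n \<and> ch_rel M N)"

lemma env_union_empty [simp]: "env_union \<Gamma> env_empty = \<Gamma>"
  by (simp add: env_union_def env_empty_def)

lemma env_union_assoc: "env_union (env_union \<Gamma> \<Delta>) \<Lambda> = env_union \<Gamma> (env_union \<Delta> \<Lambda>)"
  by (simp add: env_union_def add.assoc)

lemma env_union_upd_empty:
  "(env_union \<Gamma> \<Delta>)(x := {#}) = env_union (\<Gamma>(x := {#})) (\<Delta>(x := {#}))"
  by (simp add: env_union_def fun_eq_iff)

lemma foldr_env_union_append:
  "foldr env_union (\<Gamma>s @ \<Delta>s) env_empty = env_union (foldr env_union \<Gamma>s env_empty) (foldr env_union \<Delta>s env_empty)"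
  by (induction \<Gamma>s) (simp_all add: fun_eq_iff env_union_def env_empty_def)

lemma env_sub_refl [simp]: "env_sub \<Gamma> \<Gamma>"
  by (simp add: env_sub_def)

lemma env_sub_trans [trans]: "env_sub \<Gamma> \<Delta> \<Longrightarrow> env_sub \<Delta> \<Lambda> \<Longrightarrow> env_sub \<Gamma> \<Lambda>"
  unfolding env_sub_def by (metis subset_mset.order_trans)

lemma env_sub_union_mono: "env_sub \<Gamma> \<Gamma>' \<Longrightarrow> env_sub \<Delta> \<Delta>' \<Longrightarrow> env_sub (env_union \<Gamma> \<Delta>) (env_union \<Gamma>' \<Delta>')"
  by (simp add: env_sub_def env_union_def subset_mset.add_mono)

lemma env_sub_union_left: "env_sub \<Gamma> (env_union \<Gamma> \<Delta>)"
  by (simp add: env_sub_def env_union_def)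

lemma env_sub_union_right: "env_sub \<Delta> (env_union \<Gamma> \<Delta>)"
  by (simp add: env_sub_def env_union_def)

lemma has_type_env_notin_fv:
  "has_type \<Gamma> t \<sigma> n \<Longrightarrow> z \<notin> fv t \<Longrightarrow> \<Gamma> z = {#}"
  "has_mtype \<Gamma> t M n \<Longrightarrow> z \<notin> fv t \<Longrightarrow> \<Gamma> z = {#}"
proof (induction rule: has_type_has_mtype.inducts)
  case (t_many xs t)
  then have "\<forall>p\<in>set xs. fst p z = {#}"
    by blast
  then show ?case
    by (induction xs) (simp_all add: env_union_def env_empty_def)
qed (auto simp: env_union_def env_empty_def)

lemma has_ch_type_env_notin_fv: "has_ch_type \<Gamma> t M n \<Longrightarrow> z \<notin> fv t \<Longrightarrow> \<Gamma> z = {#}"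
  unfolding has_ch_type_def using has_type_env_notin_fv(2) by blast

lemma has_mtype_singleton: "has_type \<Gamma> t \<sigma> n \<Longrightarrow> has_mtype \<Gamma> t {#\<sigma>#} n"
  using t_many[of "[(\<Gamma>, \<sigma>, n)]" t] by simp

lemma has_mtype_union:
  assumes "has_mtype \<Gamma> t M m" and "has_mtype \<Delta> t N n"
  shows "has_mtype (env_union \<Gamma> \<Delta>) t (M + N) (m + n)"
proof -
  obtain xs where "xs \<noteq> []" and xs: "\<forall>p\<in>set xs. has_type (fst p) t (fst (snd p)) (snd (snd p))"
    and "\<Gamma> = foldr env_union (map fst xs) env_empty" "M = mset (map (fst \<circ> snd) xs)"
    "m = sum_list (map (snd \<circ> snd) xs)"
    using assms(1) by (cases rule: has_mtype.cases) auto
  moreover obtain ys where ys: "\<forall>p\<in>set ys. has_type (fst p) t (fst (snd p)) (snd (snd p))"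
    and "\<Delta> = foldr env_union (map fst ys) env_empty" "N = mset (map (fst \<circ> snd) ys)"
    "n = sum_list (map (snd \<circ> snd) ys)"
    using assms(2) by (cases rule: has_mtype.cases) auto
  moreover have "has_mtype (foldr env_union (map fst (xs @ ys)) env_empty) t
      (mset (map (fst \<circ> snd) (xs @ ys))) (sum_list (map (snd \<circ> snd) (xs @ ys)))"
    by (rule t_many) (use calculation in auto)
  ultimately show ?thesis
    by (simp del: foldr_append add: foldr_env_union_append)
qed

lemma has_mtype_induct [consumes 1, case_names singleton union]:
  assumes "has_mtype \<Gamma> t M n"
    and singleton: "\<And>\<Gamma> \<sigma> n. has_type \<Gamma> t \<sigma> n \<Longrightarrow> P \<Gamma> {#\<sigma>#} n"
    and union: "\<And>\<Gamma> M m \<Delta> N n. P \<Gamma> M m \<Longrightarrow> P \<Delta> N n \<Longrightarrow> P (env_union \<Gamma> \<Delta>) (M + N) (m + n)"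
  shows "P \<Gamma> M n"
proof -
  obtain xs where "xs \<noteq> []" and "\<forall>p\<in>set xs. has_type (fst p) t (fst (snd p)) (snd (snd p))"
    and "\<Gamma> = foldr env_union (map fst xs) env_empty" "M = mset (map (fst \<circ> snd) xs)"
    "n = sum_list (map (snd \<circ> snd) xs)"
    using assms(1) by (cases rule: has_mtype.cases) auto
  then show ?thesis
  proof (induction xs arbitrary: \<Gamma> M n)
    case (Cons p xs)
    have head: "P (fst p) {#fst (snd p)#} (snd (snd p))"
      using Cons.prems(2) by (simp add: singleton)
    show ?case
    proof (cases "xs = []")
      case True
      then show ?thesis
        using head Cons.prems(3-5) by simp
    next
      case False
      have "P (foldr env_union (map fst xs) env_empty) (mset (map (fst \<circ> snd) xs))
          (sum_list (map (snd \<circ> snd) xs))"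
        using Cons.IH[OF False] Cons.prems(2) by (simp add: comp_def)
      from union[OF head this] show ?thesis
        using Cons.prems(3-5) by (simp add: comp_def)
    qed
  qed simp
qed

lemma has_ch_type_union:
  assumes "has_ch_type \<Gamma> t M m" and "has_ch_type \<Delta> t N n"
  obtains \<Sigma> k where "has_ch_type \<Sigma> t (M + N) k" "env_sub \<Sigma> (env_union \<Gamma> \<Delta>)" "k \<le> m + n"
proof (cases "M = {#} \<or> N = {#}")
  case True
  \<comment> \<open>the derivation for the empty side only types an arbitrary witness and is discarded\<close>
  then show thesis
    using that assms env_sub_union_left env_sub_union_right by (metis add_0 add_0_right le_add1 le_add2)
next
  case False
  with assms have "has_mtype \<Gamma> t M m" "has_mtype \<Delta> t N n"
    by (auto simp: has_ch_type_def ch_rel_def)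
  then have "has_ch_type (env_union \<Gamma> \<Delta>) t (M + N) (m + n)"
    using False by (auto simp: has_ch_type_def ch_rel_def intro: has_mtype_union)
  then show thesis
    using that by simp
qed

lemma has_type_AppI:
  assumes "has_ch_type \<Gamma> t (arrows ps) nt" and "has_ch_type \<Delta> u (arrow_domains ps) nu"
    and "has_type \<Lambda> r \<sigma> nr" and "\<Lambda> y = arrow_codomains ps"
  shows "has_type (env_union (env_union \<Gamma> \<Delta>) (\<Lambda>(y := {#}))) (App t u y r) \<sigma> (Suc (nt + nu + nr))"
  using assms t_app unfolding has_ch_type_def by blast

lemma has_type_AppE:
  assumes "has_type \<Gamma> (App t u y r) \<sigma> n"
  obtains \<Gamma>t nt \<Delta> nu \<Lambda> nr ps where "has_ch_type \<Gamma>t t (arrows ps) nt"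
    "has_ch_type \<Delta> u (arrow_domains ps) nu" "has_type \<Lambda> r \<sigma> nr" "\<Lambda> y = arrow_codomains ps"
    "\<Gamma> = env_union (env_union \<Gamma>t \<Delta>) (\<Lambda>(y := {#}))" "n = Suc (nt + nu + nr)"
  using assms by (cases rule: has_type.cases) (metis that has_ch_type_def)

lemma has_mtype_App_split:
  assumes "has_mtype \<Gamma> (App t u x r) S m"
  obtains \<Gamma>t nt \<Delta> nu \<Lambda> nr ps where "has_ch_type \<Gamma>t t (arrows ps) nt"
    "has_ch_type \<Delta> u (arrow_domains ps) nu" "has_mtype \<Lambda> r S nr" "\<Lambda> x = arrow_codomains ps"
    "env_sub (env_union (env_union \<Gamma>t \<Delta>) (\<Lambda>(x := {#}))) \<Gamma>" "nt + nu + nr < m"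
proof -
  have "\<exists>\<Gamma>t nt \<Delta> nu \<Lambda> nr ps. has_ch_type \<Gamma>t t (arrows ps) nt \<and>
    has_ch_type \<Delta> u (arrow_domains ps) nu \<and> has_mtype \<Lambda> r S nr \<and> \<Lambda> x = arrow_codomains ps \<and>
    env_sub (env_union (env_union \<Gamma>t \<Delta>) (\<Lambda>(x := {#}))) \<Gamma> \<and> nt + nu + nr < m"
    using assms
  proof (induction rule: has_mtype_induct)
    case (singleton \<Gamma> \<sigma> n)
    then show ?case
      by (elim has_type_AppE) (metis env_sub_refl has_mtype_singleton lessI)
  next
    case (union \<Gamma>1 S1 m1 \<Gamma>2 S2 m2)
    then obtain \<Gamma>t1 nt1 \<Delta>1 nu1 \<Lambda>1 nr1 ps1 \<Gamma>t2 nt2 \<Delta>2 nu2 \<Lambda>2 nr2 ps2 where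
      t1: "has_ch_type \<Gamma>t1 t (arrows ps1) nt1" and t2: "has_ch_type \<Gamma>t2 t (arrows ps2) nt2" and
      u1: "has_ch_type \<Delta>1 u (arrow_domains ps1) nu1" and u2: "has_ch_type \<Delta>2 u (arrow_domains ps2) nu2" and
      r: "has_mtype \<Lambda>1 r S1 nr1" "has_mtype \<Lambda>2 r S2 nr2" and
      x: "\<Lambda>1 x = arrow_codomains ps1" "\<Lambda>2 x = arrow_codomains ps2" and
      env: "env_sub (env_union (env_union \<Gamma>t1 \<Delta>1) (\<Lambda>1(x := {#}))) \<Gamma>1"
        "env_sub (env_union (env_union \<Gamma>t2 \<Delta>2) (\<Lambda>2(x := {#}))) \<Gamma>2" and
      size: "nt1 + nu1 + nr1 < m1" "nt2 + nu2 + nr2 < m2"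
      by blast
    obtain \<Gamma>t nt where t: "has_ch_type \<Gamma>t t (arrows (ps1 @ ps2)) nt"
      and "env_sub \<Gamma>t (env_union \<Gamma>t1 \<Gamma>t2)" and nt: "nt \<le> nt1 + nt2"
      using has_ch_type_union[OF t1 t2] by auto
    moreover obtain \<Delta> nu where u: "has_ch_type \<Delta> u (arrow_domains (ps1 @ ps2)) nu"
      and "env_sub \<Delta> (env_union \<Delta>1 \<Delta>2)" and nu: "nu \<le> nu1 + nu2"
      using has_ch_type_union[OF u1 u2] by auto
    moreover have r: "has_mtype (env_union \<Lambda>1 \<Lambda>2) r (S1 + S2) (nr1 + nr2)"
      using r by (rule has_mtype_union)
    ultimately have "env_sub (env_union (env_union \<Gamma>t \<Delta>) ((env_union \<Lambda>1 \<Lambda>2)(x := {#})))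
        (env_union (env_union (env_union \<Gamma>t1 \<Gamma>t2) (env_union \<Delta>1 \<Delta>2))
          (env_union (\<Lambda>1(x := {#})) (\<Lambda>2(x := {#}))))"
      by (simp add: env_union_upd_empty env_sub_union_mono)
    also have "\<dots> = env_union (env_union (env_union \<Gamma>t1 \<Delta>1) (\<Lambda>1(x := {#})))
        (env_union (env_union \<Gamma>t2 \<Delta>2) (\<Lambda>2(x := {#})))"
      by (simp add: env_union_def fun_eq_iff ac_simps)
    also have "env_sub \<dots> (env_union \<Gamma>1 \<Gamma>2)"
      using env by (rule env_sub_union_mono)
    finally have env_sub: "env_sub (env_union (env_union \<Gamma>t \<Delta>) ((env_union \<Lambda>1 \<Lambda>2)(x := {#})))
        (env_union \<Gamma>1 \<Gamma>2)" .
    moreover have "env_union \<Lambda>1 \<Lambda>2 x = arrow_codomains (ps1 @ ps2)"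
      using x by (simp add: env_union_def)
    moreover have "nt + nu + (nr1 + nr2) < m1 + m2"
      using nt nu size by linarith
    ultimately show ?case
      using t u r env_sub by blast
  qed
  then show thesis
    using that by blast
qed

lemma has_ch_type_App_split:
  assumes "has_ch_type \<Gamma> (App t u x r) M m"
  obtains \<Gamma>t nt \<Delta> nu \<Lambda> nr ps where "has_ch_type \<Gamma>t t (arrows ps) nt"
    "has_ch_type \<Delta> u (arrow_domains ps) nu" "has_ch_type \<Lambda> r M nr" "\<Lambda> x = arrow_codomains ps"
    "env_sub (env_union (env_union \<Gamma>t \<Delta>) (\<Lambda>(x := {#}))) \<Gamma>" "nt + nu + nr < m"
proof -
  from assms obtain S where "has_mtype \<Gamma> (App t u x r) S m" and "ch_rel M S"
    by (auto simp: has_ch_type_def)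
  then show thesis
    using that has_mtype_App_split unfolding has_ch_type_def by metis
qed

theorem mainTheorem14:
  assumes "has_type \<Gamma> (App (App t u x r) u' y r') \<sigma> n1"
    and "x \<notin> fv u' \<union> fv r'"
  shows "\<exists>\<Sigma> n2. env_sub \<Sigma> \<Gamma> \<and> n2 \<le> n1 \<and> has_type \<Sigma> (App t u x (App r u' y r')) \<sigma> n2"
proof -
  from assms(1) obtain \<Gamma>0 n0 \<Delta>' nu' \<Lambda>' nr' ps where
    left: "has_ch_type \<Gamma>0 (App t u x r) (arrows ps) n0" and
    u': "has_ch_type \<Delta>' u' (arrow_domains ps) nu'" and r': "has_type \<Lambda>' r' \<sigma> nr'" and
    y: "\<Lambda>' y = arrow_codomains ps" and
    \<Gamma>: "\<Gamma> = env_union (env_union \<Gamma>0 \<Delta>') (\<Lambda>'(y := {#}))" and n1: "n1 = Suc (n0 + nu' + nr')"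
    by (rule has_type_AppE)
  from left obtain \<Gamma>t nt \<Delta> nu \<Lambda> nr qs where
    t: "has_ch_type \<Gamma>t t (arrows qs) nt" and u: "has_ch_type \<Delta> u (arrow_domains qs) nu" and
    r: "has_ch_type \<Lambda> r (arrows ps) nr" and x: "\<Lambda> x = arrow_codomains qs" and
    \<Gamma>0: "env_sub (env_union (env_union \<Gamma>t \<Delta>) (\<Lambda>(x := {#}))) \<Gamma>0" and n0: "nt + nu + nr < n0"
    by (rule has_ch_type_App_split)
  define \<Lambda>in where "\<Lambda>in = env_union (env_union \<Lambda> \<Delta>') (\<Lambda>'(y := {#}))"
  have "\<Delta>' x = {#}" "\<Lambda>' x = {#}"
    using assms(2) u' r' by (auto intro: has_ch_type_env_notin_fv has_type_env_notin_fv)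
  then have \<Lambda>in_x: "\<Lambda>in x = arrow_codomains qs" and
    \<Lambda>in_upd: "\<Lambda>in(x := {#}) = env_union (env_union (\<Lambda>(x := {#})) \<Delta>') (\<Lambda>'(y := {#}))"
    using x by (auto simp: \<Lambda>in_def env_union_def fun_eq_iff)
  have "has_type \<Lambda>in (App r u' y r') \<sigma> (Suc (nr + nu' + nr'))"
    unfolding \<Lambda>in_def using r u' r' y by (rule has_type_AppI)
  then have "has_type (env_union (env_union \<Gamma>t \<Delta>) (\<Lambda>in(x := {#}))) (App t u x (App r u' y r')) \<sigma>
      (Suc (nt + nu + Suc (nr + nu' + nr')))"
    using t u \<Lambda>in_x by (intro has_type_AppI)
  moreover have "env_sub (env_union (env_union \<Gamma>t \<Delta>) (\<Lambda>in(x := {#}))) \<Gamma>"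
    unfolding \<Lambda>in_upd \<Gamma> using \<Gamma>0 by (simp add: env_union_assoc[symmetric] env_sub_union_mono)
  ultimately show ?thesis
    using n0 n1 by (intro exI conjI) auto
qed

end
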